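(* Let $W_1,\ldots,W_n$ be i.i.d. with the unit-log-Laplace PDF $$f_W(w;\sigma_\rho)=\frac{1}{\sqrt2\,w(1-w)\sigma_\rho}\exp\!\left(-\frac{\sqrt2}{\sigma_\rho}\Big|\log\frac{w}{1-w}\Big|\right),\qquad 0<w<1,$$ and let $\theta=\theta_0=1/\sigma_{\rho,0}\in(0,\infty)$ be the true value of the parameter $\theta=1/\sigma_\rho$. Then, with probability $1$, for all sufficiently large $n$ a unique maximum likelihood estimator of $\sigma_\rho$ exists, and this estimator is consistent and asymptotically normal. *)

theory Defs
  imports "HOL-Probability.Probability"
begin

definition fW :: "real \<Rightarrow> real \<Rightarrow> real" where
  "fW \<sigma> w = (if 0 < w \<and> w < 1 then
      1 / (sqrt 2 * w * (1 - w) * \<sigma>) * exp (- (sqrt 2 / \<sigma>) * \<bar>ln (w / (1 - w))\<bar>)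
    else 0)"

definition likelihood :: "(nat \<Rightarrow> real) \<Rightarrow> nat \<Rightarrow> real \<Rightarrow> real" where
  "likelihood ws n \<sigma> = (\<Prod>i<n. fW \<sigma> (ws i))"

definition is_mle :: "(nat \<Rightarrow> real) \<Rightarrow> nat \<Rightarrow> real \<Rightarrow> bool" where
  "is_mle ws n s \<longleftrightarrow> 0 < s \<and> (\<forall>t>0. likelihood ws n t \<le> likelihood ws n s)"

text \<open>The maximum likelihood estimator (meaningful when it exists uniquely).\<close>
definition mle :: "(nat \<Rightarrow> real) \<Rightarrow> nat \<Rightarrow> real" where
  "mle ws n = (THE s. is_mle ws n s)"

end

(*
  If W has the unit-log-Laplace density with parameter sigma, then |logit W| is exponentially
  distributed with rate sqrt 2 / sigma.  Hence the likelihood of a sample in (0,1)^n is a positive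
  constant times sigma^(-n) exp (- sqrt 2 S_n / sigma), where S_n is the sum of the |logit W_i|;
  as soon as S_n > 0 it is uniquely maximised at sqrt 2 S_n / n.  The i.i.d. |logit W_i| have mean
  sigma0 / sqrt 2 and variance sigma0^2 / 2, so consistency is the strong law of large numbers for
  S_n / n and asymptotic normality is the central limit theorem for S_n, rescaled by sigma0.
*)

theory Submission
  imports Defs "HOL-Library.Discrete_Functions" "HOL-Real_Asymp.Real_Asymp"
begin

section \<open>A strong law of large numbers for nonnegative summands\<close>

lemma filterlim_floor_sqrt_at_top: "filterlim floor_sqrt at_top sequentially"
  unfolding filterlim_at_top eventually_sequentially using le_floor_sqrtI by blast

lemma LIMSEQ_div_of_mono_squares:
  fixes a :: "nat \<Rightarrow> real"
  assumes mono: "mono a" and nonneg: "\<And>n. 0 \<le> a n"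
    and lim: "(\<lambda>k. a (k\<^sup>2) / real k ^ 2) \<longlonglongrightarrow> L"
  shows "(\<lambda>n. a n / real n) \<longlonglongrightarrow> L"
proof -
  define lo where "lo k = a (k\<^sup>2) / real k ^ 2 * (real k / real (Suc k)) ^ 2" for k
  define hi where "hi k = a ((Suc k)\<^sup>2) / real (Suc k) ^ 2 * (real (Suc k) / real k) ^ 2" for k
  have lim_lo: "(\<lambda>n. lo (floor_sqrt n)) \<longlonglongrightarrow> L"
  proof -
    have "(\<lambda>k. (real k / real (Suc k)) ^ 2) \<longlonglongrightarrow> 1"
      by real_asymp
    then have "lo \<longlonglongrightarrow> L * 1"
      unfolding lo_def by (intro tendsto_mult lim)
    then show ?thesis
      using filterlim_compose[OF _ filterlim_floor_sqrt_at_top] by auto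
  qed
  have lim_hi: "(\<lambda>n. hi (floor_sqrt n)) \<longlonglongrightarrow> L"
  proof -
    have "(\<lambda>k. (real (Suc k) / real k) ^ 2) \<longlonglongrightarrow> 1"
      by real_asymp
    then have "hi \<longlonglongrightarrow> L * 1"
      unfolding hi_def by (intro tendsto_mult LIMSEQ_Suc[OF lim])
    then show ?thesis
      using filterlim_compose[OF _ filterlim_floor_sqrt_at_top] by auto
  qed
  have bounds: "lo (floor_sqrt n) \<le> a n / real n \<and> a n / real n \<le> hi (floor_sqrt n)" if "0 < n" for n
  proof -
    define k where "k = floor_sqrt n"
    have k: "0 < k" "k\<^sup>2 \<le> n" "n < (Suc k)\<^sup>2"
      using that Suc_floor_sqrt_power2_gt[of n] by (simp_all add: k_def)
    then have real_k: "real k ^ 2 \<le> real n" "real n \<le> real (Suc k) ^ 2"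
      by (simp_all del: of_nat_Suc flip: of_nat_power)
    have "lo k = a (k\<^sup>2) / real (Suc k) ^ 2"
      using k by (simp add: lo_def power_divide)
    also have "\<dots> \<le> a n / real (Suc k) ^ 2"
      using k mono by (simp add: divide_right_mono monoD)
    also have "\<dots> \<le> a n / real n"
      using real_k that nonneg[of n] by (intro divide_left_mono) auto
    finally have "lo k \<le> a n / real n" .
    have "a n / real n \<le> a ((Suc k)\<^sup>2) / real n"
      using k mono by (simp add: divide_right_mono monoD)
    also have "\<dots> \<le> a ((Suc k)\<^sup>2) / real k ^ 2"
      using real_k k that nonneg[of "(Suc k)\<^sup>2"] by (intro divide_left_mono) auto
    also have "\<dots> = hi k"
      using k by (simp add: hi_def power_divide del: of_nat_Suc)
    finally show ?thesis
      using \<open>lo k \<le> a n / real n\<close> by (simp add: k_def)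
  qed
  have "eventually (\<lambda>n. lo (floor_sqrt n) \<le> a n / real n \<and> a n / real n \<le> hi (floor_sqrt n)) sequentially"
    using eventually_gt_at_top[of "0::nat"] by eventually_elim (rule bounds)
  then show ?thesis
    by (intro tendsto_sandwich[OF _ _ lim_lo lim_hi]) (simp_all add: eventually_conj_iff)
qed

context prob_space
begin

lemma expectation_centered_sum_square:
  fixes X :: "nat \<Rightarrow> 'a \<Rightarrow> real"
  assumes indep: "indep_vars (\<lambda>_. borel) X UNIV"
    and square_int: "\<And>i. integrable M (\<lambda>x. (X i x)\<^sup>2)"
    and mean: "\<And>i. expectation (X i) = m" and var: "\<And>i. variance (X i) = v"
  shows "integrable M (\<lambda>x. (\<Sum>i<n. X i x - m)\<^sup>2)"
    and "expectation (\<lambda>x. (\<Sum>i<n. X i x - m)\<^sup>2) = n * v"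
proof -
  have [measurable]: "X i \<in> borel_measurable M" for i
    using indep unfolding indep_vars_def2 by simp
  have int: "integrable M (X i)" for i
    by (rule square_integrable_imp_integrable[OF _ square_int]) simp
  define Y where "Y = (\<lambda>i x. X i x - m)"
  have Y_indep: "indep_vars (\<lambda>_. borel) Y UNIV"
    unfolding Y_def using indep by (rule indep_vars_compose2[where Y = "\<lambda>_ x. x - m"]) simp
  have Y_int: "integrable M (Y i)" and Y_mean: "expectation (Y i) = 0" for i
    using int[of i] mean[of i] by (auto simp: Y_def prob_space)
  have cov: "integrable M (\<lambda>x. Y i x * Y j x) \<and> expectation (\<lambda>x. Y i x * Y j x) = (if i = j then v else 0)" for i j
  proof (cases "i = j")
    case True
    have "(\<lambda>x. Y i x * Y i x) = (\<lambda>x. (X i x)\<^sup>2 - 2 * m * X i x + m\<^sup>2)"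
      by (auto simp: Y_def power2_eq_square algebra_simps)
    then have "integrable M (\<lambda>x. Y i x * Y i x)"
      using square_int[of i] int[of i] by simp
    moreover have "expectation (\<lambda>x. Y i x * Y i x) = v"
      using var[of i] mean[of i] by (simp add: Y_def power2_eq_square)
    ultimately show ?thesis
      using True by simp
  next
    case False
    have "indep_vars (\<lambda>_. borel) Y {i, j}"
      by (rule indep_vars_subset[OF Y_indep]) auto
    then have "integrable M (\<lambda>x. \<Prod>k\<in>{i, j}. Y k x)"
      and "expectation (\<lambda>x. \<Prod>k\<in>{i, j}. Y k x) = (\<Prod>k\<in>{i, j}. expectation (Y k))"
      using Y_int by (auto intro: indep_vars_integrable indep_vars_lebesgue_integral)
    then show ?thesis
      using False by (simp add: Y_mean)
  qed
  have square: "(\<Sum>i<n. X i x - m)\<^sup>2 = (\<Sum>i<n. \<Sum>j<n. Y i x * Y j x)" for x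
    by (simp add: Y_def power2_eq_square sum_product)
  show "integrable M (\<lambda>x. (\<Sum>i<n. X i x - m)\<^sup>2)"
    unfolding square using cov by (intro Bochner_Integration.integrable_sum) blast
  have "expectation (\<lambda>x. \<Sum>i<n. \<Sum>j<n. Y i x * Y j x) = (\<Sum>i<n. \<Sum>j<n. if i = j then v else 0)"
    using cov by (simp add: Bochner_Integration.integral_sum Bochner_Integration.integrable_sum)
  then show "expectation (\<lambda>x. (\<Sum>i<n. X i x - m)\<^sup>2) = n * v"
    unfolding square by simp
qed

theorem strong_law_of_large_numbers_nonneg:
  fixes X :: "nat \<Rightarrow> 'a \<Rightarrow> real"
  assumes indep: "indep_vars (\<lambda>_. borel) X UNIV"
    and square_int: "\<And>i. integrable M (\<lambda>x. (X i x)\<^sup>2)"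
    and mean: "\<And>i. expectation (X i) = m" and var: "\<And>i. variance (X i) = v"
    and nonneg: "\<And>i x. 0 \<le> X i x"
  shows "AE x in M. (\<lambda>n. (\<Sum>i<n. X i x) / n) \<longlonglongrightarrow> m"
proof -
  have [measurable]: "X i \<in> borel_measurable M" for i
    using indep unfolding indep_vars_def2 by simp
  have int: "integrable M (X i)" for i
    by (rule square_integrable_imp_integrable[OF _ square_int]) simp
  define T where "T = (\<lambda>n x. \<Sum>i<n. X i x - m)"
  have [measurable]: "T n \<in> borel_measurable M" for n
    unfolding T_def by measurable
  have "expectation (T n) = 0" for n
    using int mean by (simp add: T_def Bochner_Integration.integral_sum prob_space)
  then have chebyshev: "prob {x \<in> space M. a \<le> \<bar>T n x\<bar>} \<le> n * v / a\<^sup>2" if "0 < a" for a n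
    using Chebyshev_inequality[of "T n" a] expectation_centered_sum_square[OF indep square_int mean var, of n] that
    by (simp add: T_def)
  \<comment> \<open>Along the squares, Chebyshev with threshold \<open>k powr (7/4)\<close> gives the summable bound
    \<open>v * k powr (-3/2)\<close>, so Borel-Cantelli applies, and \<open>k powr (7/4) / k\<^sup>2 \<longlonglongrightarrow> 0\<close>.\<close>
  define A where "A k = {x \<in> space M. real k powr (7/4) \<le> \<bar>T (k\<^sup>2) x\<bar>}" for k
  have [measurable]: "A k \<in> sets M" for k
    unfolding A_def by measurable
  have "summable (\<lambda>k::nat. v * real k powr (- 3/2))"
    by (simp add: summable_real_powr_iff)
  then have "summable (\<lambda>k. prob (A k))"
  proof (rule summable_comparison_test'[where N=1])
    fix k :: nat assume "1 \<le> k"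
    then have "prob (A k) \<le> real (k\<^sup>2) * v / (real k powr (7/4))\<^sup>2"
      unfolding A_def by (intro chebyshev) simp
    also have "\<dots> = v * (real k ^ 2 / (real k powr (7/4))\<^sup>2)"
      by simp
    also have "real k ^ 2 / (real k powr (7/4))\<^sup>2 = real k powr (- 3/2)"
      using \<open>1 \<le> k\<close> by (simp add: powr_powr flip: powr_diff powr_numeral)
    finally show "norm (prob (A k)) \<le> v * real k powr (- 3/2)"
      by simp
  qed
  then have "AE x in M. eventually (\<lambda>k. x \<in> space M - A k) sequentially"
    by (intro borel_cantelli_AE1) (auto simp: emeasure_eq_measure)
  then have squares: "AE x in M. (\<lambda>k. (\<Sum>i<k\<^sup>2. X i x) / real k ^ 2) \<longlonglongrightarrow> m"
  proof (rule AE_mp, intro AE_I2 impI)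
    fix x assume "x \<in> space M" and ev: "eventually (\<lambda>k. x \<in> space M - A k) sequentially"
    have bound: "eventually (\<lambda>k. norm ((\<Sum>i<k\<^sup>2. X i x) / real k ^ 2 - m) \<le> real k powr (7/4) / real k ^ 2) sequentially"
      using ev eventually_gt_at_top[of "0::nat"]
    proof eventually_elim
      case (elim k)
      have "T (k\<^sup>2) x = (\<Sum>i<k\<^sup>2. X i x) - real k ^ 2 * m"
        by (simp add: T_def sum_subtractf)
      then have "(\<Sum>i<k\<^sup>2. X i x) / real k ^ 2 - m = T (k\<^sup>2) x / real k ^ 2"
        using elim by (simp add: diff_divide_distrib)
      moreover have "\<bar>T (k\<^sup>2) x\<bar> < real k powr (7/4)"
        using elim \<open>x \<in> space M\<close> by (simp add: A_def)
      ultimately show ?case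
        by (simp add: abs_divide divide_right_mono)
    qed
    have "(\<lambda>k. real k powr (7/4) / real k ^ 2) \<longlonglongrightarrow> 0"
      by real_asymp
    then show "(\<lambda>k. (\<Sum>i<k\<^sup>2. X i x) / real k ^ 2) \<longlonglongrightarrow> m"
      using Lim_null_comparison[OF bound] by (intro LIM_zero_cancel[of _ m]) simp
  qed
  have mono: "mono (\<lambda>n. \<Sum>i<n. X i x)" for x
    by (intro monoI sum_mono2) (auto simp: nonneg)
  from squares show ?thesis
    by eventually_elim (auto intro: LIMSEQ_div_of_mono_squares[OF mono] sum_nonneg nonneg)
qed

end

section \<open>Rescaling weak limits\<close>

lemma cdf_distr_mult:
  fixes \<mu> :: "real measure"
  assumes sets: "sets \<mu> = sets borel" and c: "0 < c"
  shows "cdf (distr \<mu> borel ((*) c)) x = cdf \<mu> (x / c)"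
proof -
  have "(*) c \<in> measurable \<mu> borel"
    by (simp add: measurable_cong_sets[OF sets refl])
  then have "cdf (distr \<mu> borel ((*) c)) x = measure \<mu> ((*) c -` {..x} \<inter> space \<mu>)"
    unfolding cdf_def by (intro measure_distr) auto
  also have "(*) c -` {..x} \<inter> space \<mu> = {..x / c}"
    using c by (auto simp: sets_eq_imp_space_eq[OF sets] pos_le_divide_eq mult.commute)
  finally show ?thesis
    by (simp add: cdf_def)
qed

lemma weak_conv_m_distr_mult:
  fixes \<mu> :: "nat \<Rightarrow> real measure"
  assumes conv: "weak_conv_m \<mu> \<nu>" and c: "0 < c"
    and sets: "\<And>n. sets (\<mu> n) = sets borel" "sets \<nu> = sets borel"
  shows "weak_conv_m (\<lambda>n. distr (\<mu> n) borel ((*) c)) (distr \<nu> borel ((*) c))"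
  unfolding weak_conv_m_def weak_conv_def
proof (intro allI impI)
  fix x assume cont: "isCont (cdf (distr \<nu> borel ((*) c))) x"
  have "isCont (\<lambda>y. cdf (distr \<nu> borel ((*) c)) (c * y)) (x / c)"
    by (rule isCont_o2[where g = "cdf (distr \<nu> borel ((*) c))"]) (use c cont in auto)
  then have "isCont (cdf \<nu>) (x / c)"
    using c by (simp add: cdf_distr_mult[OF sets(2)])
  then have "(\<lambda>n. cdf (\<mu> n) (x / c)) \<longlonglongrightarrow> cdf \<nu> (x / c)"
    using conv unfolding weak_conv_m_def weak_conv_def by blast
  then show "(\<lambda>n. cdf (distr (\<mu> n) borel ((*) c)) x) \<longlonglongrightarrow> cdf (distr \<nu> borel ((*) c)) x"
    using c by (simp add: cdf_distr_mult sets)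
qed

lemma normal_density_eq_distr_std_normal:
  assumes "0 < \<sigma>"
  shows "density lborel (normal_density 0 \<sigma>) = distr std_normal_distribution borel ((*) \<sigma>)"
proof -
  interpret std: prob_space std_normal_distribution
    using real_dist_normal_dist by (simp add: real_distribution_def)
  have "distributed std_normal_distribution lborel (\<lambda>x. 0 + \<sigma> * id x) (normal_density (0 + \<sigma> * 0) (\<bar>\<sigma>\<bar> * 1))"
    using assms by (intro std.normal_density_affine) (auto simp: distributed_def distr_id2)
  then have "density lborel (normal_density 0 \<sigma>) = distr std_normal_distribution lborel ((*) \<sigma>)"
    using assms by (simp add: distributed_def)
  also have "\<dots> = distr std_normal_distribution borel ((*) \<sigma>)"
    by (rule distr_cong) auto
  finally show ?thesis .
qed

section \<open>The logit of a unit-log-Laplace variable\<close>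

definition logit :: "real \<Rightarrow> real" where
  "logit w = ln (w / (1 - w))"

definition logistic :: "real \<Rightarrow> real" where
  "logistic x = exp x / (1 + exp x)"

lemma logistic_bounds: "0 < logistic x" "logistic x < 1"
  unfolding logistic_def by (auto simp: add_pos_pos)

lemma logit_logistic: "logit (logistic x) = x"
proof -
  have "0 < 1 + exp x"
    by (simp add: add_pos_pos)
  then have "logistic x / (1 - logistic x) = exp x"
    unfolding logistic_def by (simp add: field_simps)
  then show ?thesis by (simp add: logit_def)
qed

lemma logit_le_iff:
  assumes "0 < v" "v < 1" "0 < w" "w < 1"
  shows "logit v \<le> logit w \<longleftrightarrow> v \<le> w"
  using assms by (simp add: logit_def divide_le_eq le_divide_eq algebra_simps)

lemma logit_half [simp]: "logit (1/2) = 0"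
  by (simp add: logit_def)

lemma abs_logit_le_iff:
  assumes "0 < w" "w < 1"
  shows "\<bar>logit w\<bar> \<le> a \<longleftrightarrow> logistic (- a) \<le> w \<and> w \<le> logistic a"
  using logit_le_iff[OF logistic_bounds assms, of "- a"] logit_le_iff[OF assms logistic_bounds, of a]
  by (auto simp: logit_logistic)

lemma has_real_derivative_logit:
  assumes "0 < w" "w < 1"
  shows "(logit has_real_derivative 1 / (w * (1 - w))) (at w within S)"
proof -
  have "((\<lambda>w. ln (w / (1 - w))) has_real_derivative
          (1 / (w / (1 - w))) * ((1 * (1 - w) - w * (- 1)) / ((1 - w) * (1 - w)))) (at w within S)"
    using assms by (intro derivative_eq_intros) auto
  moreover have "(1 / (w / (1 - w))) * ((1 * (1 - w) - w * (- 1)) / ((1 - w) * (1 - w))) = 1 / (w * (1 - w))"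
    using assms by (simp add: divide_simps)
  ultimately show ?thesis
    unfolding logit_def by simp
qed

lemma fW_eq_logit:
  assumes "0 < w" "w < 1" "0 < s"
  shows "fW s w = (sqrt 2 / s) / 2 * exp (- (sqrt 2 / s) * \<bar>logit w\<bar>) / (w * (1 - w))"
proof -
  have sqrt2: "sqrt 2 * (sqrt 2 * x) = 2 * x" for x :: real
    by (simp flip: mult.assoc)
  show ?thesis
    using assms unfolding fW_def logit_def by (simp add: field_simps sqrt2)
qed

lemma fW_nonneg: "0 < s \<Longrightarrow> 0 \<le> fW s w"
  unfolding fW_def by simp

lemma fW_measurable [measurable]: "fW s \<in> borel_measurable borel"
  unfolding fW_def by measurable

lemma logit_measurable [measurable]: "logit \<in> borel_measurable borel"
  unfolding logit_def by measurable

lemma has_integral_fW_lower_half: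
  assumes s: "0 < s" and ab: "0 < a" "a \<le> b" "b \<le> 1/2"
  shows "(fW s has_integral (exp (sqrt 2 / s * logit b) - exp (sqrt 2 / s * logit a)) / 2) {a..b}"
proof -
  let ?l = "sqrt 2 / s"
  have "(fW s has_integral (\<lambda>w. exp (?l * logit w) / 2) b - (\<lambda>w. exp (?l * logit w) / 2) a) {a..b}"
  proof (rule fundamental_theorem_of_calculus)
    fix w assume "w \<in> {a..b}"
    then have w: "0 < w" "w < 1" "w \<le> 1/2"
      using ab by auto
    then have "logit w \<le> 0"
      using logit_le_iff[of w "1/2"] by simp
    have "((\<lambda>w. exp (?l * logit w) / 2) has_real_derivative
        exp (?l * logit w) * (?l * (1 / (w * (1 - w)))) / 2) (at w)"
      using w by (intro DERIV_cdivide DERIV_fun_exp DERIV_cmult has_real_derivative_logit)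
    also have "exp (?l * logit w) * (?l * (1 / (w * (1 - w)))) / 2 = fW s w"
      using w s \<open>logit w \<le> 0\<close> by (simp add: fW_eq_logit ac_simps)
    finally have "((\<lambda>w. exp (?l * logit w) / 2) has_real_derivative fW s w) (at w within {a..b})"
      by (rule has_field_derivative_at_within)
    then show "((\<lambda>w. exp (?l * logit w) / 2) has_vector_derivative fW s w) (at w within {a..b})"
      by (simp add: has_real_derivative_iff_has_vector_derivative)
  qed (use ab in simp)
  then show ?thesis
    by (simp add: diff_divide_distrib)
qed

lemma has_integral_fW_upper_half:
  assumes s: "0 < s" and ab: "1/2 \<le> a" "a \<le> b" "b < 1"
  shows "(fW s has_integral (exp (- sqrt 2 / s * logit a) - exp (- sqrt 2 / s * logit b)) / 2) {a..b}"
proof -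
  let ?l = "sqrt 2 / s"
  have "(fW s has_integral (\<lambda>w. - exp (- ?l * logit w) / 2) b - (\<lambda>w. - exp (- ?l * logit w) / 2) a) {a..b}"
  proof (rule fundamental_theorem_of_calculus)
    fix w assume "w \<in> {a..b}"
    then have w: "0 < w" "w < 1" "1/2 \<le> w"
      using ab by auto
    then have "0 \<le> logit w"
      using logit_le_iff[of "1/2" w] by simp
    have "((\<lambda>w. - exp (- ?l * logit w) / 2) has_real_derivative
        - (exp (- ?l * logit w) * (- ?l * (1 / (w * (1 - w))))) / 2) (at w)"
      using w by (intro DERIV_cdivide DERIV_minus DERIV_fun_exp DERIV_cmult has_real_derivative_logit)
    also have "- (exp (- ?l * logit w) * (- ?l * (1 / (w * (1 - w))))) / 2 = fW s w"
      using w s \<open>0 \<le> logit w\<close> by (simp add: fW_eq_logit ac_simps)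
    finally have "((\<lambda>w. - exp (- ?l * logit w) / 2) has_real_derivative fW s w) (at w within {a..b})"
      by (rule has_field_derivative_at_within)
    then show "((\<lambda>w. - exp (- ?l * logit w) / 2) has_vector_derivative fW s w) (at w within {a..b})"
      by (simp add: has_real_derivative_iff_has_vector_derivative)
  qed (use ab in simp)
  then show ?thesis
    by (simp add: diff_divide_distrib)
qed

lemma has_integral_fW_abs_logit_le:
  assumes s: "0 < s" and a: "0 \<le> a"
  shows "(fW s has_integral 1 - exp (- a * (sqrt 2 / s))) {logistic (- a)..logistic a}"
proof -
  have "logit (logistic (- a)) \<le> logit (1/2)" "logit (1/2) \<le> logit (logistic a)"
    using a by (simp_all add: logit_logistic)
  then have "logistic (- a) \<le> 1/2" "1/2 \<le> logistic a"
    using logit_le_iff[of "logistic (- a)" "1/2"] logit_le_iff[of "1/2" "logistic a"]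
    by (simp_all add: logistic_bounds)
  then have "(fW s has_integral (exp (sqrt 2 / s * logit (1/2)) - exp (sqrt 2 / s * logit (logistic (- a)))) / 2
      + (exp (- sqrt 2 / s * logit (1/2)) - exp (- sqrt 2 / s * logit (logistic a))) / 2)
      {logistic (- a)..logistic a}"
    using s logistic_bounds
    by (intro has_integral_combine[of _ "1/2"] has_integral_fW_lower_half has_integral_fW_upper_half) auto
  then show ?thesis
    by (simp add: logit_logistic diff_divide_distrib mult.commute)
qed

lemma (in prob_space) distributed_abs_logit:
  assumes s: "0 < s" and W: "distributed M lborel W (fW s)"
  shows "distributed M lborel (\<lambda>x. \<bar>logit (W x)\<bar>) (exponential_density (sqrt 2 / s))"
proof (subst exponential_distributed_iff, safe)
  have [measurable]: "W \<in> borel_measurable M"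
    using distributed_measurable[OF W] by simp
  show "(\<lambda>x. \<bar>logit (W x)\<bar>) \<in> borel_measurable M"
    by measurable
  fix a :: real assume a: "0 \<le> a"
  let ?I = "{logistic (- a)..logistic a}"
  have restrict: "ennreal (fW s w) * indicator {w. \<bar>logit w\<bar> \<le> a} w
      = ennreal (if w \<in> ?I then fW s w else 0)" for w
  proof (cases "0 < w \<and> w < 1")
    case True
    then show ?thesis
      by (simp add: abs_logit_le_iff)
  next
    case False
    then have "fW s w = 0"
      by (auto simp: fW_def)
    then show ?thesis
      by simp
  qed
  have "emeasure M {x \<in> space M. \<bar>logit (W x)\<bar> \<le> a}
      = (\<integral>\<^sup>+w. ennreal (fW s w) * indicator {w. \<bar>logit w\<bar> \<le> a} w \<partial>lborel)"
    using distributed_emeasure[OF W, of "{w. \<bar>logit w\<bar> \<le> a}"]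
    by (simp add: vimage_def Int_def conj_commute)
  also have "\<dots> = ennreal (1 - exp (- a * (sqrt 2 / s)))"
    unfolding restrict
  proof (rule nn_integral_has_integral_lborel)
    show "((\<lambda>w. if w \<in> ?I then fW s w else 0) has_integral 1 - exp (- a * (sqrt 2 / s))) UNIV"
      using has_integral_fW_abs_logit_le[OF s a] by (simp only: has_integral_restrict_UNIV)
  qed (use s in \<open>auto simp: fW_nonneg\<close>)
  finally show "prob {x \<in> space M. \<bar>logit (W x)\<bar> \<le> a} = 1 - exp (- a * (sqrt 2 / s))"
    using a s by (simp add: emeasure_eq_measure)
qed (use s in simp)

section \<open>The maximum likelihood estimator\<close>

lemma inverse_power_exp_strict_max:
  fixes s t :: real
  assumes n: "0 < n" and s: "0 < s" and t: "0 < t" "t \<noteq> s"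
  shows "(1 / t) ^ n * exp (- (n * s) / t) < (1 / s) ^ n * exp (- (n * s) / s)"
proof -
  define u where "u = s / t"
  have u: "0 < u" "u \<noteq> 1"
    using s t by (auto simp: u_def)
  then have "ln u < u - 1"
    using ln_le_minus_one[of u] ln_eq_minus_one[of u] by fastforce
  then have "u < exp (u - 1)"
    using u by (metis exp_less_cancel_iff exp_ln)
  then have "u * exp (- u) < exp (- 1)"
    by (simp add: exp_diff exp_minus field_simps)
  then have "(u * exp (- u)) ^ n < exp (- 1) ^ n"
    using u n by (intro power_strict_mono) auto
  then have "u ^ n * exp (- (n * u)) < exp (- n)"
    by (simp add: power_mult_distrib flip: exp_of_nat_mult)
  then have "(1 / s) ^ n * (u ^ n * exp (- (n * u))) < (1 / s) ^ n * exp (- n)"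
    using s by simp
  moreover have "(1 / t) ^ n = (1 / s) ^ n * u ^ n" "- (n * s) / t = - (n * u)"
    using s by (simp_all add: u_def power_divide)
  ultimately show ?thesis
    using s by (simp add: mult.assoc)
qed

lemma likelihood_eq:
  assumes ws: "\<forall>i<n. 0 < ws i \<and> ws i < 1" and t: "0 < t"
  shows "likelihood ws n t = (\<Prod>i<n. 1 / (sqrt 2 * ws i * (1 - ws i)))
    * ((1 / t) ^ n * exp (- sqrt 2 * (\<Sum>i<n. \<bar>logit (ws i)\<bar>) / t))"
proof -
  have "likelihood ws n t
      = (\<Prod>i<n. 1 / (sqrt 2 * ws i * (1 - ws i)) * (1 / t) * exp (- sqrt 2 * \<bar>logit (ws i)\<bar> / t))"
    unfolding likelihood_def fW_def logit_def using ws t by (intro prod.cong) auto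
  also have "\<dots> = (\<Prod>i<n. 1 / (sqrt 2 * ws i * (1 - ws i))) * (1 / t) ^ n
      * (\<Prod>i<n. exp (- sqrt 2 * \<bar>logit (ws i)\<bar> / t))"
    by (simp only: prod.distrib prod_constant card_lessThan)
  also have "(\<Prod>i<n. exp (- sqrt 2 * \<bar>logit (ws i)\<bar> / t)) = exp (- sqrt 2 * (\<Sum>i<n. \<bar>logit (ws i)\<bar>) / t)"
    by (simp add: exp_sum sum_distrib_left sum_divide_distrib)
  finally show ?thesis
    by (simp add: mult.assoc)
qed

lemma is_mle_iff:
  assumes n: "0 < n" and ws: "\<forall>i<n. 0 < ws i \<and> ws i < 1"
    and pos: "0 < (\<Sum>i<n. \<bar>logit (ws i)\<bar>)"
  shows "is_mle ws n s \<longleftrightarrow> s = sqrt 2 * (\<Sum>i<n. \<bar>logit (ws i)\<bar>) / n"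
proof -
  define s0 where "s0 = sqrt 2 * (\<Sum>i<n. \<bar>logit (ws i)\<bar>) / n"
  have s0: "0 < s0" "n * s0 = sqrt 2 * (\<Sum>i<n. \<bar>logit (ws i)\<bar>)"
    using n pos by (simp_all add: s0_def)
  have C: "0 < (\<Prod>i<n. 1 / (sqrt 2 * ws i * (1 - ws i)))"
    using ws by (intro prod_pos) auto
  have strict: "likelihood ws n t < likelihood ws n s0" if "0 < t" "t \<noteq> s0" for t
    using inverse_power_exp_strict_max[OF n s0(1) that] C that s0
    by (simp add: likelihood_eq[OF ws])
  have "is_mle ws n s0"
    unfolding is_mle_def using s0(1) strict by (metis order_refl less_imp_le)
  moreover have "s = s0" if "is_mle ws n s"
    using that strict[of s] s0(1) unfolding is_mle_def by (meson leD)
  ultimately have "is_mle ws n s \<longleftrightarrow> s = s0"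
    by blast
  then show ?thesis
    by (simp add: s0_def)
qed

lemma is_mle_degenerate:
  assumes "n = 0 \<or> (\<exists>i<n. \<not> (0 < ws i \<and> ws i < 1))"
  shows "is_mle ws n s \<longleftrightarrow> 0 < s"
proof -
  have "likelihood ws n t = (if n = 0 then 1 else 0)" for t
    using assms unfolding likelihood_def fW_def by (auto intro: prod_zero)
  then show ?thesis
    by (simp add: is_mle_def)
qed

lemma not_is_mle_if_sum_abs_logit_eq_0:
  assumes n: "0 < n" and ws: "\<forall>i<n. 0 < ws i \<and> ws i < 1"
    and zero: "(\<Sum>i<n. \<bar>logit (ws i)\<bar>) = 0"
  shows "\<not> is_mle ws n s"
proof
  assume mle: "is_mle ws n s"
  then have s: "0 < s"
    by (simp add: is_mle_def)
  have C: "0 < (\<Prod>i<n. 1 / (sqrt 2 * ws i * (1 - ws i)))"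
    using ws by (intro prod_pos) auto
  have "(1 / s) ^ n < (1 / (s / 2)) ^ n"
    using s n by (intro power_strict_mono) (auto simp: divide_strict_right_mono)
  then have "likelihood ws n s < likelihood ws n (s / 2)"
    using s C by (simp add: likelihood_eq[OF ws] zero)
  with mle s show False
    by (auto simp: is_mle_def not_le[symmetric])
qed

text \<open>On degenerate samples \<^const>\<open>mle\<close> is a junk value, but one that does not depend on the
  sample; this is all that measurability of the estimator needs.\<close>

lemma mle_eq_if:
  "mle ws n = (if n = 0 \<or> (\<exists>i<n. \<not> (0 < ws i \<and> ws i < 1)) then THE s. 0 < s
    else if (\<Sum>i<n. \<bar>logit (ws i)\<bar>) = 0 then THE s. False
    else sqrt 2 * (\<Sum>i<n. \<bar>logit (ws i)\<bar>) / n)"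
proof -
  consider (degenerate) "n = 0 \<or> (\<exists>i<n. \<not> (0 < ws i \<and> ws i < 1))"
    | (zero) "0 < n" "\<forall>i<n. 0 < ws i \<and> ws i < 1" "(\<Sum>i<n. \<bar>logit (ws i)\<bar>) = 0"
    | (pos) "0 < n" "\<forall>i<n. 0 < ws i \<and> ws i < 1" "0 < (\<Sum>i<n. \<bar>logit (ws i)\<bar>)"
    by (metis abs_ge_zero bot_nat_0.not_eq_extremum order_le_less sum_nonneg)
  then show ?thesis
  proof cases
    case degenerate
    then have "is_mle ws n = (\<lambda>s. 0 < s)"
      using is_mle_degenerate by blast
    then show ?thesis
      using degenerate by (simp add: mle_def)
  next
    case zero
    then have "is_mle ws n = (\<lambda>s. False)"
      using not_is_mle_if_sum_abs_logit_eq_0 by blast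
    then show ?thesis
      using zero by (auto simp: mle_def)
  next
    case pos
    then show ?thesis
      using is_mle_iff[OF pos] by (auto simp: mle_def)
  qed
qed

lemma mle_eq_mean_abs_logit:
  assumes n: "0 < n" and ws: "\<forall>i<n. 0 < ws i \<and> ws i < 1" and ws0: "0 < \<bar>logit (ws 0)\<bar>"
  shows "\<exists>!s. is_mle ws n s" and "mle ws n = sqrt 2 * (\<Sum>i<n. \<bar>logit (ws i)\<bar>) / n"
proof -
  have "\<bar>logit (ws 0)\<bar> \<le> (\<Sum>i<n. \<bar>logit (ws i)\<bar>)"
    using n by (intro member_le_sum) auto
  then have "0 < (\<Sum>i<n. \<bar>logit (ws i)\<bar>)"
    using ws0 by linarith
  then have "is_mle ws n = (\<lambda>s. s = sqrt 2 * (\<Sum>i<n. \<bar>logit (ws i)\<bar>) / n)"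
    using is_mle_iff[OF n ws] by blast
  then show "\<exists>!s. is_mle ws n s" and "mle ws n = sqrt 2 * (\<Sum>i<n. \<bar>logit (ws i)\<bar>) / n"
    by (simp_all add: mle_def)
qed

locale log_laplace_sample = prob_space +
  fixes W :: "nat \<Rightarrow> 'a \<Rightarrow> real" and \<sigma>0 :: real
  assumes indep: "indep_vars (\<lambda>_. borel) W UNIV"
    and distributed_W: "\<And>i. distributed M lborel (W i) (fW \<sigma>0)"
    and \<sigma>0_pos: "0 < \<sigma>0"
begin

lemma W_measurable [measurable]: "W i \<in> borel_measurable M"
  using distributed_measurable[OF distributed_W] by simp

lemma distributed_abs_logit_W:
  "distributed M lborel (\<lambda>\<omega>. \<bar>logit (W i \<omega>)\<bar>) (exponential_density (sqrt 2 / \<sigma>0))"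
  by (rule distributed_abs_logit[OF \<sigma>0_pos distributed_W])

lemma indep_abs_logit_W: "indep_vars (\<lambda>_. borel) (\<lambda>i \<omega>. \<bar>logit (W i \<omega>)\<bar>) UNIV"
  using indep by (rule indep_vars_compose2[where Y = "\<lambda>_ w. \<bar>logit w\<bar>"]) simp

lemma integrable_abs_logit_W_square: "integrable M (\<lambda>\<omega>. \<bar>logit (W i \<omega>)\<bar>\<^sup>2)"
  by (rule erlang_ith_moment_integrable[OF _ distributed_abs_logit_W]) (simp add: \<sigma>0_pos)

lemma expectation_abs_logit_W: "expectation (\<lambda>\<omega>. \<bar>logit (W i \<omega>)\<bar>) = \<sigma>0 / sqrt 2"
  using exponential_distributed_expectation[OF _ distributed_abs_logit_W] \<sigma>0_pos by simp

lemma variance_abs_logit_W: "variance (\<lambda>\<omega>. \<bar>logit (W i \<omega>)\<bar>) = (\<sigma>0 / sqrt 2)\<^sup>2"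
  using exponential_distributed_variance[OF _ distributed_abs_logit_W] \<sigma>0_pos by (simp add: power_divide)

lemma AE_regular_sample: "AE \<omega> in M. (\<forall>i. 0 < W i \<omega> \<and> W i \<omega> < 1) \<and> 0 < \<bar>logit (W 0 \<omega>)\<bar>"
proof -
  have "AE \<omega> in M. 0 < W i \<omega> \<and> W i \<omega> < 1" for i
  proof (subst distributed_AE2[OF distributed_W])
    show "Measurable.pred lborel (\<lambda>x::real. 0 < x \<and> x < 1)"
      unfolding measurable_lborel2 by measurable
    show "AE x in lborel. 0 < ennreal (fW \<sigma>0 x) \<longrightarrow> 0 < x \<and> x < 1"
      by (rule AE_I2) (auto simp: fW_def)
  qed
  then have "AE \<omega> in M. \<forall>i. 0 < W i \<omega> \<and> W i \<omega> < 1"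
    unfolding AE_all_countable ..
  moreover have "AE \<omega> in M. 0 < \<bar>logit (W 0 \<omega>)\<bar>"
  proof (rule AE_I[where N = "{\<omega> \<in> space M. \<bar>logit (W 0 \<omega>)\<bar> \<le> 0}"])
    have "0 < sqrt 2 / \<sigma>0"
      using \<sigma>0_pos by simp
    from distributed_abs_logit_W[of 0, unfolded exponential_distributed_iff[OF this]]
    have "prob {\<omega> \<in> space M. \<bar>logit (W 0 \<omega>)\<bar> \<le> 0} = 1 - exp (- 0 * (sqrt 2 / \<sigma>0))"
      by (metis order_refl)
    then show "emeasure M {\<omega> \<in> space M. \<bar>logit (W 0 \<omega>)\<bar> \<le> 0} = 0"
      by (simp add: emeasure_eq_measure)
  qed auto
  ultimately show ?thesis
    by eventually_elim (rule conjI)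
qed

lemma AE_mle_eq_mean_abs_logit:
  "AE \<omega> in M. \<forall>n>0. (\<exists>!s. is_mle (\<lambda>i. W i \<omega>) n s)
     \<and> mle (\<lambda>i. W i \<omega>) n = sqrt 2 * (\<Sum>i<n. \<bar>logit (W i \<omega>)\<bar>) / n"
  using AE_regular_sample
proof eventually_elim
  case (elim \<omega>)
  show ?case
  proof (intro allI impI)
    fix n :: nat assume n: "0 < n"
    have ws: "\<forall>i<n. 0 < W i \<omega> \<and> W i \<omega> < 1" "0 < \<bar>logit (W 0 \<omega>)\<bar>"
      using elim by auto
    show "(\<exists>!s. is_mle (\<lambda>i. W i \<omega>) n s)
        \<and> mle (\<lambda>i. W i \<omega>) n = sqrt 2 * (\<Sum>i<n. \<bar>logit (W i \<omega>)\<bar>) / n"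
      using mle_eq_mean_abs_logit[OF n ws] by (rule conjI)
  qed
qed

lemma mle_measurable [measurable]: "(\<lambda>\<omega>. mle (\<lambda>i. W i \<omega>) n) \<in> borel_measurable M"
  unfolding mle_eq_if by measurable

lemma mle_strongly_consistent: "AE \<omega> in M. (\<lambda>n. mle (\<lambda>i. W i \<omega>) n) \<longlonglongrightarrow> \<sigma>0"
  using AE_mle_eq_mean_abs_logit
    strong_law_of_large_numbers_nonneg[OF indep_abs_logit_W integrable_abs_logit_W_square
      expectation_abs_logit_W variance_abs_logit_W abs_ge_zero]
proof eventually_elim
  case (elim \<omega>)
  then have "(\<lambda>n. sqrt 2 * ((\<Sum>i<n. \<bar>logit (W i \<omega>)\<bar>) / n)) \<longlonglongrightarrow> sqrt 2 * (\<sigma>0 / sqrt 2)"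
    by (intro tendsto_mult tendsto_const) simp
  moreover have "eventually (\<lambda>n. sqrt 2 * ((\<Sum>i<n. \<bar>logit (W i \<omega>)\<bar>) / n) = mle (\<lambda>i. W i \<omega>) n) sequentially"
    using eventually_gt_at_top[of "0::nat"] by eventually_elim (simp add: elim)
  ultimately show ?case
    by (simp add: tendsto_cong)
qed

lemma AE_eventually_ex1_is_mle:
  "AE \<omega> in M. eventually (\<lambda>n. \<exists>!s. is_mle (\<lambda>i. W i \<omega>) n s) sequentially"
  using AE_mle_eq_mean_abs_logit
proof eventually_elim
  case (elim \<omega>)
  show ?case
    using eventually_gt_at_top[of "0::nat"] by eventually_elim (use elim in blast)
qed

lemma AE_scaled_mle_error_eq:
  "AE \<omega> in M. \<forall>n. sqrt (real n) * (mle (\<lambda>i. W i \<omega>) n - \<sigma>0)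
     = \<sigma>0 * ((\<Sum>i<n. \<bar>logit (W i \<omega>)\<bar> - \<sigma>0 / sqrt 2) / sqrt (n * (\<sigma>0 / sqrt 2)\<^sup>2))"
  using AE_mle_eq_mean_abs_logit
proof eventually_elim
  case (elim \<omega>)
  define \<mu> where "\<mu> = \<sigma>0 / sqrt 2"
  have \<mu>: "0 < \<mu>" "\<sigma>0 = sqrt 2 * \<mu>"
    using \<sigma>0_pos by (simp_all add: \<mu>_def)
  have scaled: "r * (sqrt 2 * S / r\<^sup>2 - \<sigma>0) = \<sigma>0 * ((S - r\<^sup>2 * \<mu>) / (r * \<mu>))" if "0 < r" for r S
    using that \<mu> by (simp add: field_simps power2_eq_square)
  show ?case
  proof
    fix n :: nat
    show "sqrt (real n) * (mle (\<lambda>i. W i \<omega>) n - \<sigma>0)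
        = \<sigma>0 * ((\<Sum>i<n. \<bar>logit (W i \<omega>)\<bar> - \<sigma>0 / sqrt 2) / sqrt (n * (\<sigma>0 / sqrt 2)\<^sup>2))"
    proof (cases "n = 0")
      case False
      from scaled[of "sqrt n" "\<Sum>i<n. \<bar>logit (W i \<omega>)\<bar>"] show ?thesis
        using elim False \<mu>(1) by (simp add: sum_subtractf real_sqrt_mult flip: \<mu>_def)
    qed simp
  qed
qed

lemma mle_asymptotically_normal:
  "weak_conv_m (\<lambda>n. distr M borel (\<lambda>\<omega>. sqrt (real n) * (mle (\<lambda>i. W i \<omega>) n - \<sigma>0)))
     (density lborel (normal_density 0 \<sigma>0))"
proof -
  define Z where "Z n \<omega> = (\<Sum>i<n. \<bar>logit (W i \<omega>)\<bar> - \<sigma>0 / sqrt 2) / sqrt (n * (\<sigma>0 / sqrt 2)\<^sup>2)" for n \<omega>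
  have [measurable]: "Z n \<in> borel_measurable M" for n
    unfolding Z_def by measurable
  have "distr M borel (\<lambda>\<omega>. \<bar>logit (W i \<omega>)\<bar>) = density lborel (exponential_density (sqrt 2 / \<sigma>0))" for i
    using distributed_abs_logit_W[of i] by (simp add: distributed_def cong: distr_cong)
  then have "weak_conv_m (\<lambda>n. distr M borel (Z n)) std_normal_distribution"
    unfolding Z_def using integrable_abs_logit_W_square expectation_abs_logit_W variance_abs_logit_W \<sigma>0_pos
    by (intro central_limit_theorem[OF indep_abs_logit_W]) simp_all
  then have "weak_conv_m (\<lambda>n. distr (distr M borel (Z n)) borel ((*) \<sigma>0))
      (distr std_normal_distribution borel ((*) \<sigma>0))"
    using \<sigma>0_pos by (rule weak_conv_m_distr_mult) simp_all
  moreover have "distr (distr M borel (Z n)) borel ((*) \<sigma>0)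
      = distr M borel (\<lambda>\<omega>. sqrt (real n) * (mle (\<lambda>i. W i \<omega>) n - \<sigma>0))" for n
  proof -
    have "distr (distr M borel (Z n)) borel ((*) \<sigma>0) = distr M borel (\<lambda>\<omega>. \<sigma>0 * Z n \<omega>)"
      by (simp add: distr_distr comp_def)
    also have "\<dots> = distr M borel (\<lambda>\<omega>. sqrt (real n) * (mle (\<lambda>i. W i \<omega>) n - \<sigma>0))"
      using AE_scaled_mle_error_eq
      by (intro distr_cong_AE) (auto simp: Z_def elim!: eventually_mono)
    finally show ?thesis .
  qed
  ultimately show ?thesis
    using normal_density_eq_distr_std_normal[OF \<sigma>0_pos] by simp
qed

end

theorem proposition7:
  fixes M :: "'a measure" and W :: "nat \<Rightarrow> 'a \<Rightarrow> real" and \<sigma>0 :: real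
  assumes "prob_space M"
    and "prob_space.indep_vars M (\<lambda>_. borel) W UNIV"
    and "\<And>i. distributed M lborel (W i) (\<lambda>w. ennreal (fW \<sigma>0 w))"
    and "0 < \<sigma>0"
  shows "(AE \<omega> in M. eventually (\<lambda>n. \<exists>!s. is_mle (\<lambda>i. W i \<omega>) n s) sequentially)
    \<and> (AE \<omega> in M. (\<lambda>n. mle (\<lambda>i. W i \<omega>) n) \<longlonglongrightarrow> \<sigma>0)
    \<and> weak_conv_m (\<lambda>n. distr M borel (\<lambda>\<omega>. sqrt (real n) * (mle (\<lambda>i. W i \<omega>) n - \<sigma>0)))
                  (density lborel (normal_density 0 \<sigma>0))"
proof -
  interpret log_laplace_sample M W \<sigma>0
    by (intro log_laplace_sample.intro log_laplace_sample_axioms.intro assms)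
  show ?thesis
    using AE_eventually_ex1_is_mle mle_strongly_consistent mle_asymptotically_normal
    by (intro conjI)
qed

end
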